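(* Let $g,m,\ell$ be integers greater than $1$ with $g$ and $m$ odd, $\ell$ even, $m>\ell$, $\gcd(g+1,\ell)=2$ and $\gcd(m,\ell)=1$. Let $n=mg$ and $k=1+\ell g$, and let $A$ be a cyclically $k$-diagonal $n\times n$ array. Then there exists a solution to $P(A)$.
   Context: Arrays are partially filled and toroidal; $F(A)$ is the set of filled cells. $s_R(i,j)=(i,j+t)$, $s_C(i,j)=(i+t,j)$ with $t\ge1$ minimal such that the cell is filled. For $R,C\in\{-1,1\}^n$, $CN_{RC}(i,j)=s_C^{c_{j'}}(i,j')$ where $(i,j')=s_R^{r_i}(i,j)$. A solution to $P(A)$ is a pair $R,C$ such that $CN_{RC}$ is a permutation of $F(A)$ forming a single cycle of length $|F(A)|$. An $n\times n$ array is cyclically $k$-diagonal if its filled cells are exactly the $(i,j)$ with $i-j\bmod n\in\{0,\dots,k-1\}$. *)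

theory Defs
  imports Main
begin

text \<open>An n x n toroidal partially filled array is represented by its set of filled
  cells F, a subset of {0..<n} x {0..<n} (integer coordinates, taken mod n).
  A direction d is 1 or -1.\<close>

definition sR :: "int \<Rightarrow> (int \<times> int) set \<Rightarrow> int \<Rightarrow> int \<times> int \<Rightarrow> int \<times> int" where
  "sR n F d c = (let (i, j) = c;
      t = (LEAST t::nat. t \<ge> 1 \<and> (i, (j + d * int t) mod n) \<in> F)
    in (i, (j + d * int t) mod n))"

definition sC :: "int \<Rightarrow> (int \<times> int) set \<Rightarrow> int \<Rightarrow> int \<times> int \<Rightarrow> int \<times> int" where
  "sC n F d c = (let (i, j) = c;
      t = (LEAST t::nat. t \<ge> 1 \<and> ((i + d * int t) mod n, j) \<in> F)
    in ((i + d * int t) mod n, j))"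

definition CN :: "int \<Rightarrow> (int \<times> int) set \<Rightarrow> (int \<Rightarrow> int) \<Rightarrow> (int \<Rightarrow> int) \<Rightarrow> int \<times> int \<Rightarrow> int \<times> int" where
  "CN n F R C c = (let (i, j') = sR n F (R (fst c)) c in sC n F (C j') (i, j'))"

definition sign_vector :: "int \<Rightarrow> (int \<Rightarrow> int) \<Rightarrow> bool" where
  "sign_vector n V \<longleftrightarrow> (\<forall>i\<in>{0..<n}. V i \<in> {-1, 1})"

definition single_cycle_on :: "('a \<Rightarrow> 'a) \<Rightarrow> 'a set \<Rightarrow> bool" where
  "single_cycle_on f F \<longleftrightarrow> bij_betw f F F \<and> (\<forall>x\<in>F. \<forall>y\<in>F. \<exists>k. (f ^^ k) x = y)"

definition is_solution :: "int \<Rightarrow> (int \<times> int) set \<Rightarrow> (int \<Rightarrow> int) \<Rightarrow> (int \<Rightarrow> int) \<Rightarrow> bool" where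
  "is_solution n F R C \<longleftrightarrow> sign_vector n R \<and> sign_vector n C \<and> single_cycle_on (CN n F R C) F"

definition cyclically_k_diagonal :: "int \<Rightarrow> int \<Rightarrow> (int \<times> int) set \<Rightarrow> bool" where
  "cyclically_k_diagonal n k F \<longleftrightarrow>
     F = {(i, j). 0 \<le> i \<and> i < n \<and> 0 \<le> j \<and> j < n \<and> (i - j) mod n \<in> {0..<k}}"

end

theory Submission
  imports Defs "HOL-Number_Theory.Cong"
begin

text \<open>Take row direction \<open>-1\<close> on the rows \<open>0..g\<close>, \<open>1\<close> on the other rows, and column
  direction \<open>1\<close> everywhere. Describe a cell by its row \<open>i\<close> and the number \<open>u\<close> with
  diagonal \<open>-2u mod k\<close>. Then \<open>CN\<close> moves one row down, decreasing \<open>u\<close> on the rows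
  \<open>0..g\<close> and keeping it elsewhere, except that at the edge of the band it jumps
  \<open>n - k + 1 = c g\<close> rows down onto the main diagonal \<open>u = 0\<close>, where \<open>c = m - l\<close>.
  As \<open>CN\<close> is a self-map of a finite set, it is a single cycle as soon as one cell in its
  image reaches all cells.

  Grouping the rows into \<open>m\<close> blocks of \<open>g\<close> rows, a jump moves from block \<open>w\<close> to
  block \<open>w + c\<close>, and \<open>gcd c m = 1\<close> makes the jumps run through all blocks. Following
  the orbit between two visits of row \<open>0\<close> gives the return map \<open>u \<mapsto> u - h (mod N)\<close>
  on \<open>1..N\<close>, where \<open>h = g + 1\<close> and \<open>N = k - 1 = l g\<close>, except at \<open>u = 1\<close> and at
  \<open>u = h\<close>, which returns as \<open>N - g\<close>. Since \<open>gcd h N = 2\<close>, the orbit of \<open>N\<close> passes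
  through all even values, ending with \<open>h\<close>, and then through all odd values; from row
  \<open>0\<close> all other cells are reached.\<close>

section \<open>Single cycles\<close>

lemma funpow_semiconj_on:
  assumes "\<And>x. x \<in> V \<Longrightarrow> T x \<in> V"
    and "\<And>x. x \<in> V \<Longrightarrow> f (\<phi> x) = \<phi> (T x)"
    and "x \<in> V"
  shows "(f ^^ t) (\<phi> x) = \<phi> ((T ^^ t) x) \<and> (T ^^ t) x \<in> V"
  by (induction t) (use assms in auto)

lemma funpow_periodic:
  assumes "(f ^^ p) x = x"
  shows "(f ^^ (p * j)) x = x"
  by (induction j) (simp_all add: funpow_add assms)

lemma single_cycle_onI_reaches_all:
  assumes "finite A" and maps: "f ` A \<subseteq> A" and "b \<in> f ` A"
    and reach: "\<And>y. y \<in> A \<Longrightarrow> \<exists>t. (f ^^ t) b = y"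
  shows "single_cycle_on f A"
proof -
  have b: "b \<in> A" using assms by blast
  have iter_in: "(f ^^ t) b \<in> A" for t
    by (induction t) (use b maps in auto)
  have "A \<subseteq> f ` A"
  proof
    fix y assume "y \<in> A"
    then obtain t where t: "(f ^^ t) b = y" using reach by blast
    show "y \<in> f ` A"
    proof (cases t)
      case 0 then show ?thesis using t \<open>b \<in> f ` A\<close> by simp
    next
      case (Suc s) then show ?thesis using t iter_in[of s] by auto
    qed
  qed
  then have "f ` A = A" using maps by blast
  then have bij: "bij_betw f A A"
    using \<open>finite A\<close> by (simp add: bij_betw_def eq_card_imp_inj_on)
  \<comment> \<open>b has a preimage in A, which lies on the orbit of b; so b is periodic.\<close>
  obtain a where "a \<in> A" "f a = b" using \<open>b \<in> f ` A\<close> by blast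
  moreover obtain s where "(f ^^ s) b = a" using reach \<open>a \<in> A\<close> by blast
  ultimately
  have period: "(f ^^ Suc s) b = b" by simp
  have "\<exists>t. (f ^^ t) x = y" if "x \<in> A" and "y \<in> A" for x y
  proof -
    obtain p q where p: "(f ^^ p) b = x" and q: "(f ^^ q) b = y" using reach \<open>x \<in> A\<close> \<open>y \<in> A\<close> by meson
    have "(f ^^ (q + s * p)) x = (f ^^ (q + s * p + p)) b"
      unfolding p[symmetric] by (simp add: funpow_add)
    also have "q + s * p + p = q + Suc s * p" by simp
    also have "(f ^^ (q + Suc s * p)) b = (f ^^ q) ((f ^^ (Suc s * p)) b)"
      by (simp only: funpow_add comp_apply)
    also have "\<dots> = y" by (simp only: funpow_periodic[OF period] q)
    finally show ?thesis by blast
  qed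
  then show ?thesis unfolding single_cycle_on_def using bij by blast
qed

section \<open>Successor cells in a cyclically \<open>k\<close>-diagonal array\<close>

definition band :: "int \<Rightarrow> int \<Rightarrow> (int \<times> int) set" where
  "band n k = {(i, j). 0 \<le> i \<and> i < n \<and> 0 \<le> j \<and> j < n \<and> (i - j) mod n \<in> {0..<k}}"

lemma cyclically_k_diagonal_iff_band: "cyclically_k_diagonal n k F \<longleftrightarrow> F = band n k"
  unfolding cyclically_k_diagonal_def band_def ..

definition diag_cell :: "int \<Rightarrow> int \<Rightarrow> int \<Rightarrow> int \<times> int" where
  "diag_cell n i d = (i, (i - d) mod n)"

lemma band_row_mem_iff:
  assumes "0 \<le> i" "i < n"
  shows "(i, x mod n) \<in> band n k \<longleftrightarrow> (i - x) mod n < k"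
  using assms by (auto simp: band_def mod_diff_right_eq)

lemma band_col_mem_iff:
  assumes "0 \<le> j" "j < n"
  shows "(x mod n, j) \<in> band n k \<longleftrightarrow> (x - j) mod n < k"
  using assms by (auto simp: band_def mod_diff_left_eq)

lemma diag_cell_in_band:
  assumes "0 \<le> i" "i < n" "0 \<le> d" "d < k" "k \<le> n"
  shows "diag_cell n i d \<in> band n k"
  using assms by (auto simp: diag_cell_def band_def mod_diff_right_eq)

text \<open>Leaving the band along a row or a column, the next filled cell is \<open>n - k + 1\<close> steps
  away.\<close>

lemma Least_band_down:
  fixes n k d :: int
  assumes "0 \<le> d" "d < k" "k < n"
  shows "(LEAST t::nat. 1 \<le> t \<and> (d - int t) mod n < k) = (if 1 \<le> d then 1 else nat (n - k + 1))"
proof (cases "1 \<le> d")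
  case True
  then show ?thesis using assms by (intro Least_equality) auto
next
  case False
  then have "d = 0" using assms by simp
  have key: "(d - int t) mod n = n - int t" if "1 \<le> t" "int t \<le> n" for t :: nat
    using \<open>d = 0\<close> that mod_pos_pos_trivial[of "n - int t" n] minus_mod_self2[of "n - int t" n] by simp
  have "(LEAST t::nat. 1 \<le> t \<and> (d - int t) mod n < k) = nat (n - k + 1)"
  proof (rule Least_equality)
    show "1 \<le> nat (n - k + 1) \<and> (d - int (nat (n - k + 1))) mod n < k"
      using key[of "nat (n - k + 1)"] assms by simp
    show "nat (n - k + 1) \<le> t" if "1 \<le> t \<and> (d - int t) mod n < k" for t
    proof (rule ccontr)
      assume "\<not> nat (n - k + 1) \<le> t"
      then have "int t \<le> n - k" by simp
      then have "(d - int t) mod n = n - int t" using that assms by (intro key) auto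
      then show False using that \<open>int t \<le> n - k\<close> by simp
    qed
  qed
  then show ?thesis using False by simp
qed

lemma Least_band_up:
  fixes n k d :: int
  assumes "0 \<le> d" "d < k" "k < n"
  shows "(LEAST t::nat. 1 \<le> t \<and> (d + int t) mod n < k) = (if d + 1 < k then 1 else nat (n - k + 1))"
proof (cases "d + 1 < k")
  case True
  then show ?thesis using assms by (intro Least_equality) auto
next
  case False
  then have "d = k - 1" using assms by simp
  have "(LEAST t::nat. 1 \<le> t \<and> (d + int t) mod n < k) = nat (n - k + 1)"
  proof (rule Least_equality)
    show "1 \<le> nat (n - k + 1) \<and> (d + int (nat (n - k + 1))) mod n < k"
      using \<open>d = k - 1\<close> assms by simp
    show "nat (n - k + 1) \<le> t" if "1 \<le> t \<and> (d + int t) mod n < k" for t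
    proof (rule ccontr)
      assume "\<not> nat (n - k + 1) \<le> t"
      then have "(d + int t) mod n = d + int t"
        using \<open>d = k - 1\<close> assms by (intro mod_pos_pos_trivial) auto
      then show False using that \<open>d = k - 1\<close> by auto
    qed
  qed
  then show ?thesis using False by simp
qed

lemma sR_diag_cell_right:
  assumes "0 \<le> i" "i < n" "0 \<le> d" "d < k" "k < n"
  shows "sR n (band n k) 1 (diag_cell n i d) = diag_cell n i (if 1 \<le> d then d - 1 else k - 1)"
proof -
  define s where "s = (if 1 \<le> d then 1 else n - k + 1)"
  have "(i - ((i - d) mod n + 1 * int t)) mod n = (d - int t) mod n" for t :: nat
  proof -
    have "(i - ((i - d) mod n + 1 * int t)) mod n = ((i - int t) - (i - d) mod n) mod n"
      by (simp add: algebra_simps)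
    also have "\<dots> = (d - int t) mod n" by (simp add: mod_diff_right_eq)
    finally show ?thesis .
  qed
  then have least: "(LEAST t::nat. t \<ge> 1 \<and> (i, ((i - d) mod n + 1 * int t) mod n) \<in> band n k) = nat s"
    using Least_band_down[OF assms(3-5)] band_row_mem_iff[OF assms(1,2)] unfolding s_def by simp
  have "((i - d) mod n + 1 * int (nat s)) mod n = (i - (if 1 \<le> d then d - 1 else k - 1)) mod n"
  proof (cases "1 \<le> d")
    case True
    then show ?thesis unfolding s_def by (simp add: mod_simps algebra_simps)
  next
    case False
    then have "d = 0" using assms by simp
    then show ?thesis
      using assms mod_add_self2[of "i - (k - 1)" n] unfolding s_def by (simp add: algebra_simps)
  qed
  then show ?thesis unfolding sR_def diag_cell_def Let_def prod.case least by simp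
qed

lemma sR_diag_cell_left:
  assumes "0 \<le> i" "i < n" "0 \<le> d" "d < k" "k < n"
  shows "sR n (band n k) (-1) (diag_cell n i d) = diag_cell n i (if d + 1 < k then d + 1 else 0)"
proof -
  define s where "s = (if d + 1 < k then 1 else n - k + 1)"
  have "(i - ((i - d) mod n + - 1 * int t)) mod n = (d + int t) mod n" for t :: nat
  proof -
    have "(i - ((i - d) mod n + - 1 * int t)) mod n = ((i + int t) - (i - d) mod n) mod n"
      by (simp add: algebra_simps)
    also have "\<dots> = (d + int t) mod n" by (simp add: mod_diff_right_eq add.commute)
    finally show ?thesis .
  qed
  then have least: "(LEAST t::nat. t \<ge> 1 \<and> (i, ((i - d) mod n + - 1 * int t) mod n) \<in> band n k) = nat s"
    using Least_band_up[OF assms(3-5)] band_row_mem_iff[OF assms(1,2)] unfolding s_def by simp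
  have "((i - d) mod n + - 1 * int (nat s)) mod n = (i - (if d + 1 < k then d + 1 else 0)) mod n"
  proof (cases "d + 1 < k")
    case True
    then show ?thesis unfolding s_def by (simp add: mod_simps algebra_simps)
  next
    case False
    then have "d = k - 1" using assms by simp
    have "((i - d) mod n + - 1 * int (nat s)) mod n = (i - d + - 1 * int (nat s)) mod n"
      by (rule mod_add_left_eq)
    also have "i - d + - 1 * int (nat s) = i - n"
      using \<open>d = k - 1\<close> False assms unfolding s_def by simp
    finally show ?thesis using assms False by simp
  qed
  then show ?thesis unfolding sR_def diag_cell_def Let_def prod.case least by simp
qed

lemma sC_diag_cell_down:
  assumes "0 \<le> i" "i < n" "0 \<le> d" "d < k" "k < n"
  shows "sC n (band n k) 1 (diag_cell n i d) =
    (if d + 1 < k then diag_cell n ((i + 1) mod n) (d + 1) else diag_cell n ((i + n - k + 1) mod n) 0)"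
proof -
  define s where "s = (if d + 1 < k then 1 else n - k + 1)"
  have j: "0 \<le> (i - d) mod n" "(i - d) mod n < n" using assms by auto
  have "(i + 1 * int t - (i - d) mod n) mod n = (d + int t) mod n" for t :: nat
    by (simp add: mod_diff_right_eq add.commute)
  then have least: "(LEAST t::nat. t \<ge> 1 \<and> ((i + 1 * int t) mod n, (i - d) mod n) \<in> band n k) = nat s"
    using Least_band_up[OF assms(3-5)] band_col_mem_iff[OF j] unfolding s_def by simp
  have "((i + 1 * int (nat s)) mod n, (i - d) mod n) =
    (if d + 1 < k then diag_cell n ((i + 1) mod n) (d + 1) else diag_cell n ((i + n - k + 1) mod n) 0)"
  proof (cases "d + 1 < k")
    case True
    then show ?thesis unfolding s_def diag_cell_def by (simp add: mod_simps)
  next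
    case False
    then have "d = k - 1" using assms by simp
    then show ?thesis
      using assms mod_add_self2[of "i - (k - 1)" n] unfolding s_def diag_cell_def \<open>d = k - 1\<close>
      by (simp add: algebra_simps)
  qed
  then show ?thesis unfolding sC_def diag_cell_def Let_def prod.case least by simp
qed

lemma CN_columns_down:
  assumes "\<And>j. C j = 1"
  shows "CN n F R C c = sC n F 1 (sR n F (R (fst c)) c)"
  using assms by (simp add: CN_def split: prod.split)

lemma CN_diag_cell_right:
  assumes "0 \<le> i" "i < n" "0 \<le> d" "d < k" "k < n" "R i = 1" "\<And>j. C j = 1"
  shows "CN n (band n k) R C (diag_cell n i d) =
    (if 1 \<le> d then diag_cell n ((i + 1) mod n) d else diag_cell n ((i + n - k + 1) mod n) 0)"
proof -
  have "CN n (band n k) R C (diag_cell n i d) =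
      sC n (band n k) 1 (diag_cell n i (if 1 \<le> d then d - 1 else k - 1))"
    using assms sR_diag_cell_right[OF assms(1-5)] by (simp add: CN_columns_down diag_cell_def)
  then show ?thesis using assms by (simp add: sC_diag_cell_down)
qed

lemma CN_diag_cell_left:
  assumes "0 \<le> i" "i < n" "0 \<le> d" "d < k" "2 \<le> k" "k < n" "R i = -1" "\<And>j. C j = 1"
  shows "CN n (band n k) R C (diag_cell n i d) =
    (if d + 2 = k then diag_cell n ((i + n - k + 1) mod n) 0 else diag_cell n ((i + 1) mod n) ((d + 2) mod k))"
proof -
  have cn: "CN n (band n k) R C (diag_cell n i d) =
      sC n (band n k) 1 (diag_cell n i (if d + 1 < k then d + 1 else 0))"
    using assms sR_diag_cell_left[OF assms(1-4,6)] by (simp add: CN_columns_down diag_cell_def)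
  consider "d + 2 < k" | "d + 2 = k" | "d + 1 = k" using assms by linarith
  then show ?thesis
  proof cases
    case 3
    then have "d + 2 = 1 + k" by simp
    then have "(d + 2) mod k = 1" using assms by (simp only:) simp
    then show ?thesis using assms cn \<open>d + 1 = k\<close> by (simp add: sC_diag_cell_down)
  qed (use assms cn in \<open>simp_all add: sC_diag_cell_down add.commute\<close>)
qed

section \<open>The walk in diagonal coordinates\<close>

lemma cong_solve_below:
  fixes a d n p :: int
  assumes "gcd a n dvd d" "n dvd p * a" "p > 0"
  shows "\<exists>x. 0 \<le> x \<and> x < p \<and> [x * a = d] (mod n)"
proof -
  obtain y where y: "[a * y = d] (mod n)" using cong_solve_dvd_int[OF assms(1)] by blast
  have "y * a = y mod p * a + (y div p) * (p * a)"
    by (metis distrib_right div_mult_mod_eq mult.assoc mult.commute add.commute)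
  then have "[y mod p * a = y * a] (mod n)"
    using assms(2) by (simp add: cong_iff_dvd_diff)
  then have "[y mod p * a = d] (mod n)" using y by (simp add: mult.commute cong_trans)
  then show ?thesis using assms(3) by (intro exI[of _ "y mod p"]) simp
qed

locale kdiag_parameters =
  fixes g m l :: int
  assumes g_gt1: "g > 1" and l_gt1: "l > 1" and even_l: "even l" and l_less_m: "l < m"
    and gcd_g1_l: "gcd (g + 1) l = 2" and gcd_m_l: "gcd m l = 1"
begin

definition n :: int where "n = m * g"
definition k :: int where "k = 1 + l * g"
definition N :: int where "N = l * g"
definition c :: int where "c = m - l"
definition h :: int where "h = g + 1"

lemma m_gt1: "m > 1" using l_gt1 l_less_m by simp

lemma odd_g: "odd g"
proof -
  have "2 dvd g + 1" using gcd_dvd1[of "g + 1" l] gcd_g1_l by simp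
  then show ?thesis by simp
qed

lemma c_pos: "c \<ge> 1" unfolding c_def using l_less_m by simp
lemma k_eq: "k = N + 1" unfolding k_def N_def by simp
lemma N_ge: "N \<ge> 2 * g" unfolding N_def using l_gt1 g_gt1 by (simp add: mult_right_mono)
lemma n_eq: "n = c * g + N" unfolding n_def c_def N_def by (simp add: algebra_simps)
lemma cg_ge: "c * g \<ge> g" using c_pos g_gt1 by (simp add: mult_right_mono)
lemma k_less_n: "k < n" using n_eq k_eq cg_ge g_gt1 by linarith
lemma k_ge3: "k \<ge> 3" using k_eq N_ge g_gt1 by simp
lemma g_less_n: "g + 1 < n" using n_eq N_ge cg_ge g_gt1 by linarith
lemma h_le_N: "h \<le> N" using N_ge g_gt1 unfolding h_def by simp
lemma even_N: "even N" unfolding N_def using even_l by simp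
lemma even_h: "even h" unfolding h_def using odd_g by simp
lemma odd_k: "odd k" unfolding k_def using even_l by simp
lemma gap_eq: "n - k + 1 = c * g" using n_eq k_eq by simp

definition row_dirs :: "int \<Rightarrow> int" where
  "row_dirs i = (if 0 \<le> i \<and> i \<le> g then -1 else 1)"

text \<open>With row direction \<open>-1\<close> a step of \<open>CN\<close> advances the diagonal by \<open>2\<close>; the scaling by
  \<open>-2\<close>, invertible as \<open>k\<close> is odd, turns this into \<open>u \<mapsto> u - 1\<close>.\<close>

definition diag_of :: "int \<Rightarrow> int" where
  "diag_of u = (-2 * u) mod k"

definition cell :: "int \<times> int \<Rightarrow> int \<times> int" where
  "cell = (\<lambda>(i, u). diag_cell n i (diag_of u))"

text \<open>\<open>step\<close> is \<open>CN n (band n k) row_dirs (\<lambda>_. 1)\<close> read through \<open>cell\<close> (lemma \<open>CN_cell\<close>).\<close>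

definition step :: "int \<times> int \<Rightarrow> int \<times> int" where
  "step = (\<lambda>(i, u).
     if i \<le> g then (if u = 1 then ((i + c * g) mod n, 0) else (i + 1, (u - 1) mod k))
     else (if u = 0 then ((i + c * g) mod n, 0) else ((i + 1) mod n, u)))"

definition reaches :: "int \<times> int \<Rightarrow> int \<times> int \<Rightarrow> bool" (infix "\<leadsto>" 50) where
  "x \<leadsto> y \<longleftrightarrow> (\<exists>t. (step ^^ t) x = y)"

lemma reaches_refl: "x \<leadsto> x"
  unfolding reaches_def by (intro exI[of _ 0]) simp

lemma reaches_trans [trans]: "x \<leadsto> y \<Longrightarrow> y \<leadsto> z \<Longrightarrow> x \<leadsto> z"
  unfolding reaches_def by (metis comp_apply funpow_add)

lemma reaches_step: "step x = y \<Longrightarrow> x \<leadsto> y"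
  unfolding reaches_def by (intro exI[of _ 1]) simp

lemma reaches_diag:
  assumes "0 \<le> s" "0 \<le> a" "s + a \<le> g + 1" "1 \<le> v - a" "v < k"
  shows "(s, v) \<leadsto> (s + a, v - a)"
proof -
  have "(step ^^ t) (s, v) = (s + int t, v - int t)" if "s + int t \<le> g + 1" "1 \<le> v - int t" for t
    using that
  proof (induction t)
    case (Suc t)
    then show ?case using assms by (simp add: step_def)
  qed simp
  then show ?thesis unfolding reaches_def using assms by (metis int_nat_eq)
qed

lemma reaches_down:
  assumes "g + 1 \<le> i" "0 \<le> a" "i + a < n" "v \<noteq> 0"
  shows "(i, v) \<leadsto> (i + a, v)"
proof -
  have "(step ^^ t) (i, v) = (i + int t, v)" if "i + int t < n" for t
    using that
  proof (induction t)
    case (Suc t)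
    then show ?case using assms g_gt1 by (simp add: step_def)
  qed simp
  then show ?thesis unfolding reaches_def using assms by (metis int_nat_eq)
qed

lemma reaches_wrap_row0:
  assumes "g + 1 \<le> i" "i < n" "v \<noteq> 0"
  shows "(i, v) \<leadsto> (0, v)"
proof -
  have "(i, v) \<leadsto> (n - 1, v)" using reaches_down[of i "n - 1 - i" v] assms by simp
  also have "(n - 1, v) \<leadsto> (0, v)" using assms by (intro reaches_step) (simp add: step_def)
  finally show ?thesis .
qed

lemma step_diag_zero: "0 \<le> i \<Longrightarrow> i \<le> g \<Longrightarrow> step (i, 0) = (i + 1, N)"
  using k_eq k_ge3 by (simp add: step_def zmod_minus1)

definition row :: "int \<Rightarrow> int \<Rightarrow> int" where
  "row r w = r + g * (w mod m)"

lemma row_zero [simp]: "row r 0 = r"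
  unfolding row_def by simp

lemma row_bounds:
  assumes "0 \<le> r" "r < g"
  shows "0 \<le> row r w" "row r w < n"
proof -
  have "0 \<le> w mod m" "w mod m \<le> m - 1" using m_gt1 pos_mod_bound[of m w] by auto
  moreover from this have "g * (w mod m) \<le> g * (m - 1)" using g_gt1 by (simp add: mult_left_mono)
  ultimately show "0 \<le> row r w" "row r w < n"
    using assms g_gt1 unfolding row_def n_def by (simp_all add: algebra_simps)
qed

lemma row_cong: "[w = w'] (mod m) \<Longrightarrow> row r w = row r w'"
  unfolding row_def cong_def by simp

lemma row_of_decomp:
  assumes "0 \<le> i" "i < n"
  shows "row (i mod g) (i div g) = i"
proof -
  have "g * (i div g) \<le> i" using g_gt1 mult_div_mod_eq[of g i] pos_mod_sign[of g i] by linarith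
  then have "g * (i div g) < g * m" using assms unfolding n_def by (simp add: mult.commute)
  then have "i div g < m" using g_gt1 by simp
  moreover have "0 \<le> i div g" using assms g_gt1 by (simp add: pos_imp_zdiv_nonneg_iff)
  ultimately show ?thesis unfolding row_def by (simp add: mult_div_mod_eq)
qed

lemma row_jump:
  assumes "0 \<le> r" "r < g"
  shows "(row r w + c * g) mod n = row r (w + c)"
proof -
  define q where "q = (w mod m + c) div m"
  have "w mod m + c = (w + c) mod m + m * q"
    unfolding q_def by (metis mod_add_left_eq mod_mult_div_eq)
  then have "g * (w mod m + c) = g * ((w + c) mod m + m * q)" by (rule arg_cong)
  then have "row r w + c * g = row r (w + c) + q * n"
    unfolding row_def n_def by (simp add: algebra_simps)
  then show ?thesis using row_bounds[OF assms] by simp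
qed

lemma row_gt_g:
  assumes "0 \<le> r" "r < g" "\<not> [w = 0] (mod m)" "1 \<le> r \<or> \<not> [w = 1] (mod m)"
  shows "g < row r w"
proof -
  have "0 \<le> w mod m" "w mod m \<noteq> 0" "1 \<le> r \<or> w mod m \<noteq> 1"
    using assms m_gt1 unfolding cong_def by auto
  then have "1 \<le> w mod m" "1 \<le> r \<or> 2 \<le> w mod m" by arith+
  then have "g * 1 \<le> g * (w mod m)" "1 \<le> r \<or> g * 2 \<le> g * (w mod m)"
    using g_gt1 by (auto intro: mult_left_mono)
  then show ?thesis using assms g_gt1 unfolding row_def by linarith
qed

lemma step_jump:
  assumes "0 \<le> r" "r < g" "g < row r w"
  shows "step (row r w, 0) = (row r (w + c), 0)"
  using assms row_jump[OF assms(1,2)] by (simp add: step_def)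

lemma step_jump_from_1:
  assumes "0 \<le> r" "r < g" "row r w \<le> g"
  shows "step (row r w, 1) = (row r (w + c), 0)"
  using assms row_jump[OF assms(1,2)] by (simp add: step_def)

lemma reaches_jumps:
  assumes "0 \<le> r" "r < g" "1 \<le> J" and "\<And>j. 1 \<le> j \<Longrightarrow> j < J \<Longrightarrow> g < row r (w + j * c)"
  shows "(row r (w + c), 0) \<leadsto> (row r (w + J * c), 0)"
  using assms(3,4)
proof (induction J rule: int_ge_induct)
  case base
  then show ?case by (simp add: reaches_refl)
next
  case (step J)
  then have "(row r (w + c), 0) \<leadsto> (row r (w + J * c), 0)" by simp
  also have "\<dots> \<leadsto> (row r (w + (J + 1) * c), 0)"
    using step step_jump[OF assms(1,2)] by (intro reaches_step) (simp add: algebra_simps)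
  finally show ?case .
qed

lemma coprime_c_m: "coprime c m"
  using gcd_m_l unfolding c_def coprime_iff_gcd_eq_1[symmetric]
  by (meson coprime_def dvd_diff_right_iff)

lemma mult_c_cong_imp_eq:
  assumes "0 \<le> j" "j < m" "0 \<le> j'" "j' < m" "[j * c = j' * c] (mod m)"
  shows "j = j'"
  using assms cong_mult_rcancel[OF coprime_c_m] unfolding cong_def by simp

definition c_inv :: int where
  "c_inv = (SOME j. 0 \<le> j \<and> j < m \<and> [j * c = 1] (mod m))"

lemma c_inv: "1 \<le> c_inv" "c_inv < m" "[c_inv * c = 1] (mod m)"
proof -
  have "\<exists>j. 0 \<le> j \<and> j < m \<and> [j * c = 1] (mod m)"
    using cong_solve_below[of c m 1 m] coprime_c_m m_gt1 by simp
  then have *: "0 \<le> c_inv \<and> c_inv < m \<and> [c_inv * c = 1] (mod m)"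
    unfolding c_inv_def by (rule someI_ex)
  moreover have "c_inv \<noteq> 0"
    using * m_gt1 unfolding cong_def by auto
  ultimately show "1 \<le> c_inv" "c_inv < m" "[c_inv * c = 1] (mod m)" by auto
qed

lemma exists_multiple_of_c:
  "\<exists>J. 1 \<le> J \<and> J \<le> m \<and> [J * c = w] (mod m)"
proof -
  obtain j where j: "0 \<le> j" "j < m" "[j * c = w] (mod m)"
    using cong_solve_below[of c m w m] coprime_c_m m_gt1 by auto
  show ?thesis
  proof (cases "j = 0")
    case True
    then have "[m * c = w] (mod m)" using j by (simp add: cong_def)
    then show ?thesis using m_gt1 by (intro exI[of _ m]) auto
  qed (use j in \<open>auto intro: exI[of _ j]\<close>)
qed

lemma reaches_tour:
  assumes "1 \<le> r" "r < g" "1 \<le> J" "J \<le> m"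
  shows "(row r c, 0) \<leadsto> (row r (J * c), 0)"
proof -
  have "(row r (0 + c), 0) \<leadsto> (row r (0 + J * c), 0)"
  proof (rule reaches_jumps)
    fix j assume "1 \<le> j" "j < J"
    then have "\<not> [j * c = 0 * c] (mod m)" using mult_c_cong_imp_eq[of j 0] assms by auto
    then show "g < row r (0 + j * c)" using assms by (intro row_gt_g) auto
  qed (use assms in auto)
  then show ?thesis by simp
qed

lemma reaches_tour_to_g:
  assumes "1 \<le> J" "J \<le> c_inv"
  shows "(row 0 c, 0) \<leadsto> (row 0 (J * c), 0)"
proof -
  have "(row 0 (0 + c), 0) \<leadsto> (row 0 (0 + J * c), 0)"
  proof (rule reaches_jumps)
    fix j assume "1 \<le> j" "j < J"
    then have "\<not> [j * c = 0 * c] (mod m)" "\<not> [j * c = c_inv * c] (mod m)"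
      using mult_c_cong_imp_eq[of j 0] mult_c_cong_imp_eq[of j c_inv] assms c_inv by auto
    then show "g < row 0 (0 + j * c)"
      using c_inv(3) g_gt1 by (intro row_gt_g) (auto dest: cong_sym cong_trans)
  qed (use assms g_gt1 in auto)
  then show ?thesis by simp
qed

lemma reaches_tour_from_g:
  assumes "1 \<le> J" "J \<le> m - c_inv"
  shows "(row 0 (1 + c), 0) \<leadsto> (row 0 (1 + J * c), 0)"
proof (rule reaches_jumps)
  fix j assume j: "1 \<le> j" "j < J"
  have "\<not> [1 + j * c = 1] (mod m)"
  proof
    assume "[1 + j * c = 1] (mod m)"
    then have "[j * c = 0 * c] (mod m)" using cong_add_lcancel[of 1 "j * c" 0] by simp
    then show False using mult_c_cong_imp_eq[of j 0] j assms c_inv by auto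
  qed
  moreover have "\<not> [1 + j * c = 0] (mod m)"
  proof
    assume "[1 + j * c = 0] (mod m)"
    then have "[c_inv * c + j * c = 0] (mod m)" using c_inv(3) cong_add_rcancel cong_trans cong_sym
      by (metis add.commute cong_add)
    then have "[(c_inv + j) * c = 0 * c] (mod m)" by (simp add: distrib_right)
    then show False using mult_c_cong_imp_eq[of "c_inv + j" 0] j assms c_inv by auto
  qed
  ultimately show "g < row 0 (1 + j * c)" using g_gt1 by (intro row_gt_g) auto
qed (use assms g_gt1 in auto)

section \<open>Every cell is reached\<close>

lemma reaches_first_jump:
  assumes "0 \<le> r" "r < g"
  shows "(0, r + 1) \<leadsto> (row r c, 0)"
proof -
  have "(0, r + 1) \<leadsto> (0 + r, r + 1 - r)" using assms k_eq N_ge by (intro reaches_diag) auto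
  also have "\<dots> \<leadsto> (row r c, 0)" using step_jump_from_1[of r 0] assms by (intro reaches_step) simp
  finally show ?thesis .
qed

lemma reaches_h_jump: "(0, h) \<leadsto> (row 0 (1 + c), 0)"
proof -
  have "(0, h) \<leadsto> (0 + g, h - g)" using g_gt1 k_eq h_le_N unfolding h_def by (intro reaches_diag) auto
  also have "\<dots> \<leadsto> (row 0 (1 + c), 0)"
    using step_jump_from_1[of 0 1] g_gt1 m_gt1 unfolding h_def by (intro reaches_step) (simp add: row_def)
  finally show ?thesis .
qed

lemma reaches_return_big:
  assumes "h + 1 \<le> u" "u \<le> N"
  shows "(0, u) \<leadsto> (0, u - h)"
proof -
  have "(0, u) \<leadsto> (0 + h, u - h)" using assms k_eq g_gt1 unfolding h_def by (intro reaches_diag) auto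
  also have "\<dots> \<leadsto> (0, u - h)" using assms g_less_n unfolding h_def by (intro reaches_wrap_row0) auto
  finally show ?thesis by simp
qed

lemma reaches_return_small:
  assumes "2 \<le> u" "u \<le> g"
  shows "(0, u) \<leadsto> (0, u - h + N)"
proof -
  define r where "r = u - 1"
  have r: "1 \<le> r" "r < g" using assms unfolding r_def by auto
  have "(0, u) \<leadsto> (row r c, 0)" using reaches_first_jump[of r] r unfolding r_def by simp
  also have "\<dots> \<leadsto> (row r (m * c), 0)" using r m_gt1 by (intro reaches_tour) auto
  also have "\<dots> \<leadsto> (u, N)" using r step_diag_zero[of r] unfolding r_def row_def by (intro reaches_step) simp
  also have "\<dots> \<leadsto> (u + (g + 1 - u), N - (g + 1 - u))"
    using assms k_eq N_ge by (intro reaches_diag) auto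
  also have "\<dots> \<leadsto> (0, N - (g + 1 - u))" using assms N_ge g_less_n by (intro reaches_wrap_row0) auto
  finally show ?thesis unfolding h_def by (simp add: algebra_simps)
qed

lemma reaches_return_h: "(0, h) \<leadsto> (0, N - g)"
proof -
  have "(0, h) \<leadsto> (row 0 (1 + c), 0)" by (rule reaches_h_jump)
  also have "\<dots> \<leadsto> (row 0 (1 + (m - c_inv) * c), 0)" using c_inv by (intro reaches_tour_from_g) auto
  also have "row 0 (1 + (m - c_inv) * c) = 0"
  proof -
    have "[1 + (m - c_inv) * c = 1 - c_inv * c + m * c] (mod m)" by (simp add: algebra_simps)
    also have "[1 - c_inv * c + m * c = 1 - 1 + 0] (mod m)"
      using c_inv(3) by (intro cong_add cong_diff) (auto simp: cong_def)
    finally show ?thesis unfolding row_def cong_def by simp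
  qed
  also have "(0, 0) \<leadsto> (1, N)" using step_diag_zero[of 0] g_gt1 by (intro reaches_step) simp
  also have "\<dots> \<leadsto> (1 + g, N - g)" using g_gt1 k_eq N_ge by (intro reaches_diag) auto
  also have "\<dots> \<leadsto> (0, N - g)" using N_ge g_gt1 g_less_n by (intro reaches_wrap_row0) auto
  finally show ?thesis .
qed

lemma N_pos: "0 < N" using N_ge g_gt1 by simp

definition rep :: "int \<Rightarrow> int" where
  "rep x = (x - 1) mod N + 1"

lemma rep_bounds: "1 \<le> rep x" "rep x \<le> N"
  unfolding rep_def using N_pos pos_mod_bound[of N "x - 1"] pos_mod_sign[of N "x - 1"] by linarith+

lemma rep_eq_self: "1 \<le> x \<Longrightarrow> x \<le> N \<Longrightarrow> rep x = x"
  unfolding rep_def by simp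

lemma rep_eq_iff: "rep x = rep y \<longleftrightarrow> [x = y] (mod N)"
proof -
  have "rep x = rep y \<longleftrightarrow> [x - 1 = y - 1] (mod N)" unfolding rep_def cong_def by simp
  also have "\<dots> \<longleftrightarrow> [x = y] (mod N)" using cong_add_rcancel[of x "-1" y N] by simp
  finally show ?thesis .
qed

lemma even_rep_iff: "even (rep x) \<longleftrightarrow> even x"
proof -
  have "even ((x - 1) mod N) \<longleftrightarrow> even (x - 1)"
    using even_N by (simp only: even_iff_mod_2_eq_zero mod_mod_cancel)
  then show ?thesis unfolding rep_def by simp
qed

lemma reaches_return:
  assumes "1 \<le> u" "u \<le> N" "u \<noteq> 1" "u \<noteq> h"
  shows "(0, u) \<leadsto> (0, rep (u - h))"
proof (cases "h + 1 \<le> u")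
  case True
  then show ?thesis using reaches_return_big assms g_gt1 rep_eq_self[of "u - h"] unfolding h_def by simp
next
  case False
  then have "2 \<le> u" "u \<le> g" using assms unfolding h_def by auto
  moreover have "rep (u - h) = u - h + N"
    using rep_eq_iff[of "u - h" "u - h + N"] rep_eq_self[of "u - h + N"] \<open>2 \<le> u\<close> \<open>u \<le> g\<close> N_ge
    unfolding h_def by (simp add: cong_def)
  ultimately show ?thesis using reaches_return_small by simp
qed

lemma rep_cong_self: "[rep x = x] (mod N)"
  using rep_eq_iff[of "rep x" x] rep_eq_self[OF rep_bounds] by simp

lemma gcd_h_N: "gcd h N = 2"
proof -
  have "gcd (g + 1) (l * g) = gcd (g + 1) l"
    using coprime_add_one_left[of g] by (rule gcd_mult_right_right_cancel)
  then show ?thesis unfolding h_def N_def using gcd_g1_l by simp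
qed

lemma N_dvd_mult_h_iff: "N dvd t * h \<longleftrightarrow> N div 2 dvd t"
proof -
  have N: "N = 2 * (N div 2)" and h: "h = 2 * (h div 2)" using even_N even_h by simp_all
  have "2 * gcd (h div 2) (N div 2) = 2" using gcd_h_N gcd_mult_left[of 2 "h div 2" "N div 2"] N h by simp
  then have "coprime (N div 2) (h div 2)" by (simp add: coprime_iff_gcd_eq_1 gcd.commute)
  have "N dvd t * h \<longleftrightarrow> 2 * (N div 2) dvd 2 * (t * (h div 2))" using N h by (metis mult.left_commute)
  also have "\<dots> \<longleftrightarrow> N div 2 dvd t * (h div 2)" by simp
  also have "\<dots> \<longleftrightarrow> N div 2 dvd t" using \<open>coprime (N div 2) (h div 2)\<close> by (rule coprime_dvd_mult_left_iff)
  finally show ?thesis .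
qed

lemma rep_shift_ne:
  assumes "0 < t" "t < N div 2"
  shows "rep (x - t * h) \<noteq> rep x"
proof
  assume "rep (x - t * h) = rep x"
  then have "N dvd t * h" unfolding rep_eq_iff cong_iff_dvd_diff by simp
  then have "N div 2 dvd t" by (simp add: N_dvd_mult_h_iff)
  then show False using assms zdvd_imp_le[of "N div 2" t] by simp
qed

lemma reaches_return_chain:
  fixes j :: nat
  assumes "1 \<le> a" "a \<le> N" "\<And>i. i < j \<Longrightarrow> rep (a - int i * h) \<noteq> 1 \<and> rep (a - int i * h) \<noteq> h"
  shows "(0, a) \<leadsto> (0, rep (a - int j * h))"
  using assms(3)
proof (induction j)
  case 0
  then show ?case using assms rep_eq_self reaches_refl by simp
next
  case (Suc j)
  then have "(0, a) \<leadsto> (0, rep (a - int j * h))" by simp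
  also have "\<dots> \<leadsto> (0, rep (rep (a - int j * h) - h))"
    using Suc.prems[of j] rep_bounds by (intro reaches_return) auto
  also have "rep (rep (a - int j * h) - h) = rep (a - int (Suc j) * h)"
  proof -
    have "[rep (a - int j * h) - h = (a - int j * h) - h] (mod N)"
      using rep_cong_self by (rule cong_diff) (rule cong_refl)
    then show ?thesis unfolding rep_eq_iff by (simp add: algebra_simps)
  qed
  finally show ?case .
qed

lemma start_reaches_even_row0:
  assumes "0 \<le> j" "j < N div 2"
  shows "(0, N) \<leadsto> (0, rep (N - j * h))"
proof -
  have "rep (N - int i * h) \<noteq> 1 \<and> rep (N - int i * h) \<noteq> h" if "i < nat j" for i
  proof
    show "rep (N - int i * h) \<noteq> 1" using even_rep_iff[of "N - int i * h"] even_N even_h by auto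
    have "[N - int i * h = h - (int i + 1) * h] (mod N)" by (simp add: cong_def algebra_simps)
    then have "rep (N - int i * h) = rep (h - (int i + 1) * h)" by (simp add: rep_eq_iff)
    also have "\<dots> \<noteq> rep h" using that assms by (intro rep_shift_ne) auto
    finally show "rep (N - int i * h) \<noteq> h" using rep_eq_self[of h] h_le_N g_gt1 unfolding h_def by simp
  qed
  then show ?thesis using reaches_return_chain[of N "nat j"] N_pos assms by simp
qed

lemma start_reaches_odd_row0:
  assumes "0 \<le> j" "j < N div 2"
  shows "(0, N) \<leadsto> (0, rep (N - g - j * h))"
proof -
  have "(0, N) \<leadsto> (0, rep (N - (N div 2 - 1) * h))"
    using assms by (intro start_reaches_even_row0) auto
  also have "rep (N - (N div 2 - 1) * h) = rep h"
  proof -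
    have "N dvd N div 2 * h" using N_dvd_mult_h_iff by simp
    then have "[N - (N div 2 - 1) * h = h] (mod N)"
      unfolding cong_iff_dvd_diff by (simp add: algebra_simps)
    then show ?thesis by (simp add: rep_eq_iff)
  qed
  also have "rep h = h" using h_le_N g_gt1 unfolding h_def by (intro rep_eq_self) auto
  also have "(0, h) \<leadsto> (0, N - g)" by (rule reaches_return_h)
  also have "\<dots> \<leadsto> (0, rep (N - g - int (nat j) * h))"
  proof (rule reaches_return_chain)
    fix i assume "i < nat j"
    show "rep (N - g - int i * h) \<noteq> 1 \<and> rep (N - g - int i * h) \<noteq> h"
    proof
      show "rep (N - g - int i * h) \<noteq> h" using even_rep_iff[of "N - g - int i * h"] even_N even_h odd_g by auto
      have "[N - g - int i * h = 1 - (int i + 1) * h] (mod N)" by (simp add: cong_def algebra_simps h_def)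
      then have "rep (N - g - int i * h) = rep (1 - (int i + 1) * h)" by (simp add: rep_eq_iff)
      also have "\<dots> \<noteq> rep 1" using \<open>i < nat j\<close> assms by (intro rep_shift_ne) auto
      finally show "rep (N - g - int i * h) \<noteq> 1" using rep_eq_self[of 1] N_pos by simp
    qed
  qed (use N_ge g_gt1 in auto)
  finally show ?thesis using assms by simp
qed

lemma start_reaches_row0:
  assumes "1 \<le> u" "u \<le> N"
  shows "(0, N) \<leadsto> (0, u)"
proof -
  have solve: "\<exists>j. 0 \<le> j \<and> j < N div 2 \<and> [j * h = d] (mod N)" if "even d" for d
    using cong_solve_below[of h N d "N div 2"] gcd_h_N N_dvd_mult_h_iff N_ge g_gt1 that by auto
  show ?thesis
  proof (cases "even u")
    case True
    then obtain j where j: "0 \<le> j" "j < N div 2" "[j * h = N - u] (mod N)"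
      using solve[of "N - u"] True even_N by auto
    then have "[N - j * h = N - (N - u)] (mod N)" by (intro cong_diff cong_refl)
    then have "rep (N - j * h) = u" using rep_eq_iff[of "N - j * h" u] rep_eq_self assms by simp
    then show ?thesis using start_reaches_even_row0[OF j(1,2)] by simp
  next
    case False
    then obtain j where j: "0 \<le> j" "j < N div 2" "[j * h = N - g - u] (mod N)"
      using solve[of "N - g - u"] False even_N odd_g by auto
    then have "[N - g - j * h = N - g - (N - g - u)] (mod N)" by (intro cong_diff cong_refl)
    then have "rep (N - g - j * h) = u" using rep_eq_iff[of "N - g - j * h" u] rep_eq_self assms by simp
    then show ?thesis using start_reaches_odd_row0[OF j(1,2)] by simp
  qed
qed

lemma start_reaches_diag0:
  assumes "0 \<le> i" "i < n"
  shows "(0, N) \<leadsto> (i, 0)"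
proof -
  define r where "r = i mod g"
  have r: "0 \<le> r" "r < g" using g_gt1 unfolding r_def by auto
  obtain J where J: "1 \<le> J" "J \<le> m" "[J * c = i div g] (mod m)" using exists_multiple_of_c by blast
  have i: "row r (J * c) = i" using row_cong[OF J(3)] row_of_decomp[OF assms] unfolding r_def by simp
  consider "1 \<le> r" | "r = 0" "J \<le> c_inv" | "r = 0" "c_inv < J" using r by linarith
  then show ?thesis
  proof cases
    case 1
    have "(0, N) \<leadsto> (0, r + 1)" using r N_ge by (intro start_reaches_row0) auto
    also have "\<dots> \<leadsto> (row r c, 0)" using r by (rule reaches_first_jump)
    also have "\<dots> \<leadsto> (row r (J * c), 0)" using 1 r J by (intro reaches_tour) auto
    finally show ?thesis using i by simp
  next
    case 2
    have "(0, N) \<leadsto> (0, 0 + 1)" using N_pos by (intro start_reaches_row0) auto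
    also have "\<dots> \<leadsto> (row 0 c, 0)" using g_gt1 by (intro reaches_first_jump) auto
    also have "\<dots> \<leadsto> (row 0 (J * c), 0)" using 2 J by (intro reaches_tour_to_g) auto
    finally show ?thesis using i 2 by simp
  next
    case 3
    have "(0, N) \<leadsto> (0, h)" using h_le_N g_gt1 unfolding h_def by (intro start_reaches_row0) auto
    also have "\<dots> \<leadsto> (row 0 (1 + c), 0)" by (rule reaches_h_jump)
    also have "\<dots> \<leadsto> (row 0 (1 + (J - c_inv) * c), 0)" using 3 J by (intro reaches_tour_from_g) auto
    also have "row 0 (1 + (J - c_inv) * c) = row 0 (J * c)"
    proof (rule row_cong)
      have "[1 + (J - c_inv) * c = J * c + 1 - c_inv * c] (mod m)" by (simp add: algebra_simps)
      also have "[J * c + 1 - c_inv * c = J * c + 1 - 1] (mod m)"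
        using c_inv(3) by (intro cong_diff cong_refl)
      finally show "[1 + (J - c_inv) * c = J * c] (mod m)" by simp
    qed
    finally show ?thesis using i 3 by simp
  qed
qed

lemma start_reaches_upper:
  assumes "0 \<le> i" "i \<le> g + 1" "1 \<le> u" "u \<le> N"
  shows "(0, N) \<leadsto> (i, u)"
proof (cases "u + i \<le> N")
  case True
  have "(0, N) \<leadsto> (0, u + i)" using True assms by (intro start_reaches_row0) auto
  also have "\<dots> \<leadsto> (0 + i, u + i - i)" using True assms k_eq by (intro reaches_diag) auto
  finally show ?thesis by simp
next
  case False
  define t where "t = i - N + u"
  have t: "1 \<le> t" "t \<le> i" using False assms unfolding t_def by auto
  have "(0, N) \<leadsto> (t - 1, 0)" using t assms g_less_n by (intro start_reaches_diag0) auto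
  also have "\<dots> \<leadsto> (t, N)" using step_diag_zero[of "t - 1"] t assms by (intro reaches_step) simp
  also have "\<dots> \<leadsto> (t + (i - t), N - (i - t))" using t assms k_eq unfolding t_def by (intro reaches_diag) auto
  finally show ?thesis unfolding t_def by simp
qed

lemma start_reaches_all:
  assumes "x \<in> {0..<n} \<times> {0..<k}"
  shows "(0, N) \<leadsto> x"
proof -
  obtain i u where x: "x = (i, u)" and i: "0 \<le> i" "i < n" and u: "0 \<le> u" "u < k"
    using assms by auto
  consider "u = 0" | "1 \<le> u" "i \<le> g + 1" | "1 \<le> u" "g + 1 < i" using u by linarith
  then show ?thesis
  proof cases
    case 1
    then show ?thesis using start_reaches_diag0 i x by simp
  next
    case 2
    then show ?thesis using start_reaches_upper i u k_eq x by simp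
  next
    case 3
    have "(0, N) \<leadsto> (g + 1, u)" using 3 u k_eq g_gt1 by (intro start_reaches_upper) auto
    also have "\<dots> \<leadsto> (g + 1 + (i - (g + 1)), u)" using 3 i by (intro reaches_down) auto
    finally show ?thesis using x by simp
  qed
qed

section \<open>Back to the array\<close>

lemma diag_of_bounds: "0 \<le> diag_of u" "diag_of u < k"
  unfolding diag_of_def using k_ge3 by auto

lemma diag_of_inj:
  assumes "0 \<le> u" "u < k" "0 \<le> u'" "u' < k" "diag_of u = diag_of u'"
  shows "u = u'"
proof -
  have "coprime (-2) k" using odd_k by simp
  then have "[u = u'] (mod k)"
    using assms(5) cong_mult_lcancel[of "-2" k u u'] unfolding diag_of_def cong_def by simp
  then show ?thesis using assms unfolding cong_def by simp
qed

lemma diag_of_pred: "diag_of ((u - 1) mod k) = (diag_of u + 2) mod k"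
proof -
  have "(-2 * ((u - 1) mod k)) mod k = (-2 * (u - 1)) mod k" by (rule mod_mult_right_eq)
  also have "-2 * (u - 1) = -2 * u + 2" by simp
  also have "(-2 * u + 2) mod k = ((-2 * u) mod k + 2) mod k" by (simp add: mod_add_left_eq)
  finally show ?thesis unfolding diag_of_def .
qed

lemma diag_of_eq_0_iff: "0 \<le> u \<Longrightarrow> u < k \<Longrightarrow> diag_of u = 0 \<longleftrightarrow> u = 0"
  using diag_of_inj[of u 0] k_ge3 by (auto simp: diag_of_def)

lemma diag_of_eq_k_minus_2_iff: "0 \<le> u \<Longrightarrow> u < k \<Longrightarrow> diag_of u + 2 = k \<longleftrightarrow> u = 1"
proof -
  have "(-2) mod k = (k - 2) mod k" using minus_mod_self2[of "k - 2" k] by simp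
  also have "\<dots> = k - 2" using k_ge3 by (intro mod_pos_pos_trivial) auto
  finally have "diag_of 1 = k - 2" by (simp add: diag_of_def)
  then show "0 \<le> u \<Longrightarrow> u < k \<Longrightarrow> diag_of u + 2 = k \<longleftrightarrow> u = 1"
    using diag_of_inj[of u 1] k_ge3 by auto
qed

lemma CN_cell:
  assumes "x \<in> {0..<n} \<times> {0..<k}"
  shows "CN n (band n k) row_dirs (\<lambda>_. 1) (cell x) = cell (step x)"
proof -
  obtain i u where x: "x = (i, u)" and i: "0 \<le> i" "i < n" and u: "0 \<le> u" "u < k"
    using assms by auto
  have gap: "i + n - k + 1 = i + c * g" using gap_eq by simp
  have k2: "2 \<le> k" using k_ge3 by simp
  show ?thesis
  proof (cases "i \<le> g")
    case True
    then have "row_dirs i = -1" using i unfolding row_dirs_def by simp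
    from CN_diag_cell_left[where R = row_dirs and C = "\<lambda>_. 1", OF i diag_of_bounds[of u] k2 k_less_n this]
    have "CN n (band n k) row_dirs (\<lambda>_. 1) (cell x) =
        (if diag_of u + 2 = k then diag_cell n ((i + c * g) mod n) 0
         else diag_cell n ((i + 1) mod n) ((diag_of u + 2) mod k))"
      unfolding x cell_def gap by simp
    then show ?thesis
      using True i u g_less_n diag_of_eq_k_minus_2_iff[OF u] diag_of_pred[of u]
      unfolding x cell_def step_def by auto
  next
    case False
    then have "row_dirs i = 1" unfolding row_dirs_def by simp
    from CN_diag_cell_right[where R = row_dirs and C = "\<lambda>_. 1", OF i diag_of_bounds[of u] k_less_n this]
    have "CN n (band n k) row_dirs (\<lambda>_. 1) (cell x) =
        (if 1 \<le> diag_of u then diag_cell n ((i + 1) mod n) (diag_of u)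
         else diag_cell n ((i + c * g) mod n) 0)"
      unfolding x cell_def gap by simp
    then show ?thesis
      using False diag_of_eq_0_iff[OF u] diag_of_bounds[of u]
      unfolding x cell_def step_def by auto
  qed
qed

lemma step_in_grid: "x \<in> {0..<n} \<times> {0..<k} \<Longrightarrow> step x \<in> {0..<n} \<times> {0..<k}"
  using k_ge3 g_less_n by (auto simp: step_def)

lemma cell_image: "cell ` ({0..<n} \<times> {0..<k}) = band n k"
proof
  show "cell ` ({0..<n} \<times> {0..<k}) \<subseteq> band n k"
    using diag_cell_in_band diag_of_bounds k_less_n by (auto simp: cell_def)
  show "band n k \<subseteq> cell ` ({0..<n} \<times> {0..<k})"
  proof
    fix y assume "y \<in> band n k"
    then obtain i j where y: "y = (i, j)" and ij: "0 \<le> i" "i < n" "0 \<le> j" "j < n" "(i - j) mod n < k"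
      by (auto simp: band_def)
    define d where "d = (i - j) mod n"
    \<comment> \<open>\<open>(k + 1) div 2\<close> inverts \<open>-2\<close> modulo the odd number \<open>k\<close>.\<close>
    define u where "u = (- d * ((k + 1) div 2)) mod k"
    have "even (k + 1)" using odd_k by simp
    then have half: "2 * ((k + 1) div 2) = k + 1" by (rule dvd_mult_div_cancel)
    have "diag_of u = (-2 * (- d * ((k + 1) div 2))) mod k"
      unfolding diag_of_def u_def by (rule mod_mult_right_eq)
    also have "-2 * (- d * ((k + 1) div 2)) = d * (2 * ((k + 1) div 2))" by simp
    also have "\<dots> = d + d * k" unfolding half by (simp add: algebra_simps)
    also have "(d + d * k) mod k = d" using ij unfolding d_def by simp
    moreover have "(i - d) mod n = j" using ij unfolding d_def by (simp add: mod_diff_right_eq)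
    ultimately have "cell (i, u) = y" unfolding cell_def diag_cell_def y by simp
    moreover have "(i, u) \<in> {0..<n} \<times> {0..<k}" using ij k_ge3 unfolding u_def by simp
    ultimately show "y \<in> cell ` ({0..<n} \<times> {0..<k})" by blast
  qed
qed

lemma single_cycle_CN: "single_cycle_on (CN n (band n k) row_dirs (\<lambda>_. 1)) (band n k)"
proof (rule single_cycle_onI_reaches_all)
  let ?f = "CN n (band n k) row_dirs (\<lambda>_. 1)"
  let ?V = "{0..<n} \<times> {0..<k}"
  have to_band: "cell x \<in> band n k" if "x \<in> ?V" for x
    using imageI[OF that, of cell] unfolding cell_image .
  have from_band: "\<exists>x\<in>?V. y = cell x" if "y \<in> band n k" for y
    using that unfolding cell_image[symmetric] by (rule imageE) blast
  have start: "(0, N) \<in> ?V" and last: "(n - 1, N) \<in> ?V" using k_eq N_pos g_less_n g_gt1 by auto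
  show "finite (band n k)" using cell_image finite_imageI[of ?V cell] by simp
  show "?f ` band n k \<subseteq> band n k"
  proof
    fix z assume "z \<in> ?f ` band n k"
    then obtain x where "x \<in> ?V" "z = ?f (cell x)" using from_band by blast
    then show "z \<in> band n k" using CN_cell step_in_grid to_band by simp
  qed
  have "?f (cell (n - 1, N)) = cell (0, N)"
    using CN_cell[OF last] g_less_n N_pos by (simp add: step_def)
  then show "cell (0, N) \<in> ?f ` band n k" using to_band[OF last] by (metis image_eqI)
  fix y assume "y \<in> band n k"
  then obtain x where x: "x \<in> ?V" "y = cell x" using from_band by blast
  then obtain t where "(step ^^ t) (0, N) = x" using start_reaches_all unfolding reaches_def by blast
  then have "(?f ^^ t) (cell (0, N)) = y"
    using funpow_semiconj_on[of ?V step ?f cell, OF step_in_grid CN_cell start] x by simp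
  then show "\<exists>t. (?f ^^ t) (cell (0, N)) = y" ..
qed

lemma is_solution_band: "is_solution n (band n k) row_dirs (\<lambda>_. 1)"
proof -
  have "sign_vector n row_dirs" "sign_vector n (\<lambda>_. 1)"
    unfolding sign_vector_def row_dirs_def by auto
  then show ?thesis unfolding is_solution_def using single_cycle_CN by simp
qed

end

theorem corollary5p3:
  fixes g m l :: int and F :: "(int \<times> int) set"
  assumes "g > 1" "m > 1" "l > 1"
    and "odd g" "odd m" "even l" "m > l"
    and "gcd (g + 1) l = 2" "gcd m l = 1"
    and "cyclically_k_diagonal (m * g) (1 + l * g) F"
  shows "\<exists>R C. is_solution (m * g) F R C"
proof -
  \<comment> \<open>\<open>odd g\<close>, \<open>odd m\<close> and \<open>m > 1\<close> follow from the other hypotheses.\<close>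
  interpret kdiag_parameters g m l using assms by unfold_locales
  have "F = band n k"
    using assms(10) unfolding cyclically_k_diagonal_iff_band n_def k_def .
  then show ?thesis using is_solution_band unfolding n_def by blast
qed

end
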